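(* For every integer $m\ge 0$, there exist an NFA with $m+1$ states and a DFA with two states, both over an alphabet of cardinality $m+1$, such that there is a tower of height $2^{m+1}$ between their languages and there is no infinite tower between their languages.
   Context: For strings $v=a_1\cdots a_k$ and $w$, $v\preccurlyeq w$ if $w\in\Sigma^*a_1\Sigma^*a_2\Sigma^*\cdots\Sigma^*a_k\Sigma^*$. A sequence $(w_i)_{i=1}^r$ of strings is a tower between languages $K$ and $L$ if $w_1\in K\cup L$ and for all $i=1,\dots,r-1$: $w_i\preccurlyeq w_{i+1}$, $w_i\in K$ implies $w_{i+1}\in L$, and $w_i\in L$ implies $w_{i+1}\in K$; $r$ is its height. An infinite tower is an infinite sequence with the same properties. *)

theory Defs
  imports Main "HOL-Library.Sublist"
begin

definition is_nfa :: "'a set \<Rightarrow> 's set \<Rightarrow> 's set \<Rightarrow> 's set \<Rightarrow> ('s \<Rightarrow> 'a \<Rightarrow> 's set) \<Rightarrow> bool" where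
  "is_nfa Al Q I F delta \<longleftrightarrow> finite Al \<and> finite Q \<and> I \<subseteq> Q \<and> F \<subseteq> Q \<and>
     (\<forall>q\<in>Q. \<forall>a\<in>Al. delta q a \<subseteq> Q)"

definition is_dfa :: "'a set \<Rightarrow> 's set \<Rightarrow> 's set \<Rightarrow> 's set \<Rightarrow> ('s \<Rightarrow> 'a \<Rightarrow> 's set) \<Rightarrow> bool" where
  "is_dfa Al Q I F delta \<longleftrightarrow> is_nfa Al Q I F delta \<and> card I = 1 \<and>
     (\<forall>q\<in>Q. \<forall>a\<in>Al. card (delta q a) \<le> 1)"

fun steps :: "('s \<Rightarrow> 'a \<Rightarrow> 's set) \<Rightarrow> 's set \<Rightarrow> 'a list \<Rightarrow> 's set" where
  "steps delta S [] = S"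
| "steps delta S (a # w) = steps delta (\<Union>q\<in>S. delta q a) w"

definition lang :: "'a set \<Rightarrow> 's set \<Rightarrow> ('s \<Rightarrow> 'a \<Rightarrow> 's set) \<Rightarrow> 's set \<Rightarrow> 'a list set" where
  "lang Al I delta F = {w. set w \<subseteq> Al \<and> steps delta I w \<inter> F \<noteq> {}}"

definition is_tower :: "'a list set \<Rightarrow> 'a list set \<Rightarrow> 'a list list \<Rightarrow> bool" where
  "is_tower K L ws \<longleftrightarrow> ws \<noteq> [] \<and> hd ws \<in> K \<union> L \<and>
     (\<forall>i. Suc i < length ws \<longrightarrow>
        subseq (ws ! i) (ws ! Suc i) \<and>
        (ws ! i \<in> K \<longrightarrow> ws ! Suc i \<in> L) \<and>
        (ws ! i \<in> L \<longrightarrow> ws ! Suc i \<in> K))"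

definition is_infinite_tower :: "'a list set \<Rightarrow> 'a list set \<Rightarrow> (nat \<Rightarrow> 'a list) \<Rightarrow> bool" where
  "is_infinite_tower K L w \<longleftrightarrow> w 0 \<in> K \<union> L \<and>
     (\<forall>i. subseq (w i) (w (Suc i)) \<and>
        (w i \<in> K \<longrightarrow> w (Suc i) \<in> L) \<and>
        (w i \<in> L \<longrightarrow> w (Suc i) \<in> K))"

end

theory Submission
  imports Defs
begin

(* The NFA, with states 0..m all initial and 0 the only final state, loops in a state q > 0 on the
   letters below q and on the letter q may jump to any smaller state.  So a nonempty word of its
   language K has the form x q y, with all letters of x below q and y accepted from a state below q;
   in particular no word of K ends in 0, whereas the DFA accepts exactly the words ending in 0.
   Towers of height 2^(m+1) arise by doubling: the tower for m+1 is the tower for m followed by a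
   copy of it with z (m+1) prepended to every word, z being its last word.
   An infinite tower yields an infinite sequence of words of K each of which, with 0 appended,
   embeds into the next.  If the letter m occurs in one of these words, it occurs in all later
   ones, and cutting each word after the first occurrence of m leaves a sequence of the same kind
   for the bound m - 1; otherwise the sequence already lives below m.  Induction on m excludes
   such sequences. *)

definition descent_delta :: "nat \<Rightarrow> nat \<Rightarrow> nat set" where
  "descent_delta q a =
     (if q = 0 then {} else if a < q then {q} else if a = q then {0..<q} else {})"

definition last_zero_delta :: "nat \<Rightarrow> nat \<Rightarrow> nat set" where
  "last_zero_delta q a = (if a = 0 then {1} else {0})"

lemma steps_UN: "steps d S w = (\<Union>s\<in>S. steps d {s} w)"
proof (induction w arbitrary: S)
  case (Cons a w)
  have "steps d S (a # w) = (\<Union>s\<in>(\<Union>q\<in>S. d q a). steps d {s} w)"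
    by (simp only: steps.simps Cons.IH[of "\<Union>q\<in>S. d q a"])
  also have "\<dots> = (\<Union>q\<in>S. \<Union>s\<in>d q a. steps d {s} w)"
    by blast
  also have "\<dots> = (\<Union>q\<in>S. steps d {q} (a # w))"
    by (simp only: steps.simps Cons.IH[of "d _ a"] UN_insert UN_empty Un_empty_right)
  finally show ?case .
qed simp

lemma steps_last_zero:
  "steps last_zero_delta {q} w = {if w = [] then q else if last w = 0 then 1 else 0}"
  by (induction w arbitrary: q) (auto simp: last_zero_delta_def)

definition descends_from :: "nat \<Rightarrow> nat list \<Rightarrow> bool" where
  "descends_from j w \<longleftrightarrow> 0 \<in> steps descent_delta {j} w"

lemma descends_from_Nil [simp]: "descends_from j [] \<longleftrightarrow> j = 0"
  by (auto simp: descends_from_def)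

lemma descends_from_Cons:
  "descends_from j (a # w) \<longleftrightarrow> (\<exists>s\<in>descent_delta j a. descends_from s w)"
  by (simp add: descends_from_def steps_UN[of _ "descent_delta j a"])

lemma descends_from_0 [simp]: "descends_from 0 w \<longleftrightarrow> w = []"
  by (cases w) (auto simp: descends_from_Cons descent_delta_def)

lemma descends_from_pos_iff:
  assumes "0 < j"
  shows "descends_from j w \<longleftrightarrow>
    (\<exists>x y k. w = x @ j # y \<and> set x \<subseteq> {..<j} \<and> k < j \<and> descends_from k y)"
proof
  show "descends_from j w \<Longrightarrow> \<exists>x y k. w = x @ j # y \<and> set x \<subseteq> {..<j} \<and> k < j \<and> descends_from k y"
  proof (induction w)
    case (Cons a w)
    then obtain s where s: "s \<in> descent_delta j a" "descends_from s w"
      by (auto simp: descends_from_Cons)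
    show ?case
    proof (cases "a < j")
      case True
      with s Cons.IH obtain x y k where "w = x @ j # y" "set x \<subseteq> {..<j}" "k < j" "descends_from k y"
        by (auto simp: descent_delta_def split: if_splits)
      with True have "a # w = (a # x) @ j # y" "set (a # x) \<subseteq> {..<j}" by auto
      with \<open>k < j\<close> \<open>descends_from k y\<close> show ?thesis by blast
    next
      case False
      with s assms have "a = j" "s < j" by (auto simp: descent_delta_def split: if_splits)
      with s have "a # w = [] @ j # w" "set [] \<subseteq> {..<j}" "s < j" "descends_from s w" by auto
      then show ?thesis by blast
    qed
  qed (use assms in simp)
next
  assume "\<exists>x y k. w = x @ j # y \<and> set x \<subseteq> {..<j} \<and> k < j \<and> descends_from k y"
  then obtain x y k where "w = x @ j # y" "set x \<subseteq> {..<j}" "k < j" "descends_from k y"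
    by blast
  then show "descends_from j w"
    by (induction x arbitrary: w) (auto simp: descends_from_Cons descent_delta_def)
qed

lemma descends_from_set: "descends_from j w \<Longrightarrow> set w \<subseteq> {..j}"
proof (induction j arbitrary: w rule: less_induct)
  case (less j)
  show ?case
  proof (cases "j = 0")
    case False
    with less.prems obtain x y k
      where "w = x @ j # y" "set x \<subseteq> {..<j}" "k < j" "descends_from k y"
      using descends_from_pos_iff by blast
    with less.IH[of k y] show ?thesis by auto
  qed (use less.prems in simp)
qed

lemma descends_from_last: "descends_from j w \<Longrightarrow> w = [] \<or> last w \<noteq> 0"
proof (induction j arbitrary: w rule: less_induct)
  case (less j)
  show ?case
  proof (cases "j = 0")
    case False
    with less.prems obtain x y k
      where "w = x @ j # y" "k < j" "descends_from k y"
      using descends_from_pos_iff by blast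
    with False less.IH[of k y] show ?thesis by auto
  qed (use less.prems in simp)
qed

definition descent_lang :: "nat \<Rightarrow> nat list set" where
  "descent_lang i = {w. \<exists>j\<le>i. descends_from j w}"

definition ends_zero_lang :: "nat \<Rightarrow> nat list set" where
  "ends_zero_lang m = {w. set w \<subseteq> {..m} \<and> w \<noteq> [] \<and> last w = 0}"

lemma lang_descent_delta: "lang {..m} {..m} descent_delta {0} = descent_lang m"
proof -
  have "(\<exists>q\<le>m. descends_from q w) \<longleftrightarrow> set w \<subseteq> {..m} \<and> (\<exists>q\<le>m. descends_from q w)" for w
    using descends_from_set by fastforce
  then show ?thesis
    unfolding lang_def descent_lang_def descends_from_def by (subst steps_UN) auto
qed

lemma lang_last_zero_delta: "lang {..m} {0} last_zero_delta {1} = ends_zero_lang m"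
  unfolding lang_def ends_zero_lang_def steps_last_zero by auto

lemma descent_lang_ends_nonzero: "w \<in> descent_lang i \<Longrightarrow> w = [] \<or> last w \<noteq> 0"
  unfolding descent_lang_def using descends_from_last by blast

lemma descent_lang_Suc_extend:
  assumes "set z \<subseteq> {..i}" "t \<in> descent_lang i"
  shows "z @ Suc i # t \<in> descent_lang (Suc i)"
proof -
  obtain j where "j < Suc i" "descends_from j t"
    using assms(2) by (auto simp: descent_lang_def less_Suc_eq_le)
  moreover have "set z \<subseteq> {..<Suc i}" using assms(1) by auto
  ultimately have "descends_from (Suc i) (z @ Suc i # t)"
    using descends_from_pos_iff[of "Suc i"] by blast
  then show ?thesis by (auto simp: descent_lang_def)
qed

lemma descent_lang_SucE:
  assumes "w \<in> descent_lang (Suc i)"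
  obtains "w \<in> descent_lang i" "Suc i \<notin> set w"
    | x y where "w = x @ Suc i # y" "Suc i \<notin> set x" "y \<in> descent_lang i"
proof -
  obtain j where j: "j \<le> Suc i" "descends_from j w"
    using assms by (auto simp: descent_lang_def)
  show thesis
  proof (cases "j = Suc i")
    case True
    with j obtain x y k where "w = x @ Suc i # y" "set x \<subseteq> {..<Suc i}" "k < Suc i" "descends_from k y"
      using descends_from_pos_iff[of "Suc i"] by auto
    then show thesis
      using that(2) by (auto simp: descent_lang_def less_Suc_eq_le)
  next
    case False
    with j have "j \<le> i" by simp
    moreover have "Suc i \<notin> set w"
      using descends_from_set[OF j(2)] \<open>j \<le> i\<close> by auto
    ultimately show thesis
      using that(1) j(2) by (auto simp: descent_lang_def)
  qed
qed

definition zero_chain :: "nat list set \<Rightarrow> (nat \<Rightarrow> nat list) \<Rightarrow> bool" where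
  "zero_chain A f \<longleftrightarrow> (\<forall>n. f n \<in> A \<and> subseq (f n @ [0]) (f (Suc n)))"

lemma subseq_cancel_first_occurrence:
  assumes "c \<notin> set xs'" "subseq (xs @ c # ys) (xs' @ c # ys')"
  shows "subseq ys ys'"
proof -
  from assms(2) have "subseq (c # ys) (xs' @ c # ys')"
    by (metis list_emb_appendD subseq_drop_many)
  with assms(1) show ?thesis
    by (induction xs') (auto split: if_splits)
qed

lemma subseq_snoc_neq:
  assumes "subseq xs (ys @ [a])" "xs = [] \<or> last xs \<noteq> a"
  shows "subseq xs ys"
  using assms(1)
proof (rule subseq_appendE)
  fix xs1 xs2 assume "xs = xs1 @ xs2" "subseq xs1 ys" "subseq xs2 [a]"
  with assms(2) show ?thesis by (cases xs2) (auto split: if_splits)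
qed

lemma set_subseq_chain:
  assumes "\<And>n. subseq (f n) (f (Suc n))" "c \<in> set (f N)"
  shows "c \<in> set (f (N + n))"
proof (induction n)
  case (Suc n)
  then show ?case using list_emb_set[OF assms(1)[of "N + n"]] by auto
qed (use assms(2) in simp)

lemma zero_chain_descent_Suc:
  assumes f: "zero_chain (descent_lang (Suc i)) f"
  shows "\<exists>g. zero_chain (descent_lang i) g"
proof -
  have fSuc: "f n \<in> descent_lang (Suc i)" and f0: "subseq (f n @ [0]) (f (Suc n))" for n
    using f unfolding zero_chain_def by blast+
  show ?thesis
  proof (cases "\<exists>N. Suc i \<in> set (f N)")
    case False
    have "f n \<in> descent_lang i" for n
    proof -
      have "Suc i \<notin> set (f n)" using False by blast
      with fSuc[of n] show ?thesis by (cases rule: descent_lang_SucE) auto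
    qed
    with f0 show ?thesis unfolding zero_chain_def by blast
  next
    case True
    then obtain N where N: "Suc i \<in> set (f N)" by blast
    have "subseq (f n) (f (Suc n))" for n
      using f0 by (meson subseq_order.trans subseq_rev_drop_many subseq_order.refl)
    then have mem: "Suc i \<in> set (f (N + n))" for n
      using N by (rule set_subseq_chain)
    have "\<exists>x y. f (N + n) = x @ Suc i # y \<and> Suc i \<notin> set x \<and> y \<in> descent_lang i" for n
      using fSuc[of "N + n"] by (cases rule: descent_lang_SucE) (use mem in auto)
    then obtain X Y where XY: "\<And>n. f (N + n) = X n @ Suc i # Y n"
      "\<And>n. Suc i \<notin> set (X n)" "\<And>n. Y n \<in> descent_lang i"
      by metis
    have "subseq (Y n @ [0]) (Y (Suc n))" for n
    proof -
      have "subseq (X n @ Suc i # (Y n @ [0])) (X (Suc n) @ Suc i # Y (Suc n))"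
        using f0[of "N + n"] by (simp only: XY append_assoc append_Cons add_Suc_right[symmetric])
      with XY(2) show ?thesis by (rule subseq_cancel_first_occurrence)
    qed
    with XY(3) show ?thesis unfolding zero_chain_def by blast
  qed
qed

lemma no_zero_chain_descent: "\<not> zero_chain (descent_lang i) f"
proof (induction i arbitrary: f)
  case 0
  have "descent_lang 0 = {[]}" by (auto simp: descent_lang_def)
  then show ?case unfolding zero_chain_def by (metis list_emb_Nil2 singletonD snoc_eq_iff_butlast)
next
  case (Suc i)
  then show ?case using zero_chain_descent_Suc by blast
qed

lemma infinite_tower_zero_chain:
  assumes "is_infinite_tower (descent_lang m) (ends_zero_lang m) f"
  shows "\<exists>g. zero_chain (descent_lang m) g"
proof -
  have sub: "\<And>i. subseq (f i) (f (Suc i))"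
    and KL: "\<And>i. f i \<in> descent_lang m \<Longrightarrow> f (Suc i) \<in> ends_zero_lang m"
    and LK: "\<And>i. f i \<in> ends_zero_lang m \<Longrightarrow> f (Suc i) \<in> descent_lang m"
    using assms unfolding is_infinite_tower_def by blast+
  have step: "f (Suc (Suc i)) \<in> descent_lang m \<and> subseq (f i @ [0]) (f (Suc (Suc i)))"
    if "f i \<in> descent_lang m" for i
  proof -
    have L: "f (Suc i) \<in> ends_zero_lang m" using KL that .
    then obtain u where u: "f (Suc i) = u @ [0]"
      unfolding ends_zero_lang_def by (metis (mono_tags) append_butlast_last_id mem_Collect_eq)
    have "subseq (f i) u"
      using sub[of i] descent_lang_ends_nonzero[OF that] unfolding u by (rule subseq_snoc_neq)
    then have "subseq (f i @ [0]) (f (Suc i))" by (simp add: u)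
    with LK[OF L] sub[of "Suc i"] show ?thesis by (metis subseq_order.trans)
  qed
  obtain n0 where n0: "f n0 \<in> descent_lang m"
    using assms LK unfolding is_infinite_tower_def by blast
  define g where "g k = f (n0 + 2 * k)" for k
  have g: "g k \<in> descent_lang m" for k
    by (induction k) (auto simp: g_def n0 step)
  have "zero_chain (descent_lang m) g"
    unfolding zero_chain_def using g step by (simp add: g_def)
  then show ?thesis by blast
qed

definition alternating_chain :: "'a list set \<Rightarrow> 'a list set \<Rightarrow> 'a list list \<Rightarrow> bool" where
  "alternating_chain K L ws \<longleftrightarrow>
     (\<forall>i<length ws. (even i \<longrightarrow> ws ! i \<in> K) \<and> (odd i \<longrightarrow> ws ! i \<in> L)) \<and>
     (\<forall>i. Suc i < length ws \<longrightarrow> subseq (ws ! i) (ws ! Suc i))"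

lemma alternating_chain_is_tower:
  assumes "K \<inter> L = {}" "ws \<noteq> []" "alternating_chain K L ws"
  shows "is_tower K L ws"
proof -
  have mem: "ws ! i \<in> K \<longleftrightarrow> even i" "ws ! i \<in> L \<longleftrightarrow> odd i" if "i < length ws" for i
    using assms(1,3) that unfolding alternating_chain_def by blast+
  show ?thesis
    unfolding is_tower_def
    using assms(2,3) mem[of 0] by (auto simp: hd_conv_nth alternating_chain_def mem)
qed

lemma alternating_chain_mono:
  "alternating_chain K L ws \<Longrightarrow> K \<subseteq> K' \<Longrightarrow> L \<subseteq> L' \<Longrightarrow> alternating_chain K' L' ws"
  unfolding alternating_chain_def by blast

lemma alternating_chain_map:
  assumes "alternating_chain K L ws" "f ` K \<subseteq> K'" "f ` L \<subseteq> L'"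
    and "\<And>xs ys. subseq xs ys \<Longrightarrow> subseq (f xs) (f ys)"
  shows "alternating_chain K' L' (map f ws)"
  using assms unfolding alternating_chain_def by auto

lemma alternating_chain_append:
  assumes xs: "alternating_chain K L xs" and ys: "alternating_chain K L ys"
    and "even (length xs)" "xs \<noteq> []" "ys \<noteq> []" "subseq (last xs) (hd ys)"
  shows "alternating_chain K L (xs @ ys)"
  unfolding alternating_chain_def
proof (rule conjI; intro allI impI)
  fix i assume i: "i < length (xs @ ys)"
  show "(even i \<longrightarrow> (xs @ ys) ! i \<in> K) \<and> (odd i \<longrightarrow> (xs @ ys) ! i \<in> L)"
  proof (cases "i < length xs")
    case True
    with xs show ?thesis unfolding alternating_chain_def by (simp add: nth_append)
  next
    case False
    then obtain k where k: "i = length xs + k" by (metis le_iff_add not_less)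
    with i have "k < length ys" by simp
    with ys \<open>even (length xs)\<close> show ?thesis by (simp add: k alternating_chain_def)
  qed
next
  fix i assume i: "Suc i < length (xs @ ys)"
  consider "Suc i < length xs" | "Suc i = length xs" | "length xs \<le> i" by linarith
  then show "subseq ((xs @ ys) ! i) ((xs @ ys) ! Suc i)"
  proof cases
    case 1
    with xs show ?thesis unfolding alternating_chain_def by (simp add: nth_append)
  next
    case 2
    then have "i = length xs - 1" by simp
    with 2 assms(4-6) show ?thesis by (simp add: nth_append last_conv_nth hd_conv_nth)
  next
    case 3
    with i ys show ?thesis unfolding alternating_chain_def by (simp add: nth_append Suc_diff_le)
  qed
qed

lemma alternating_chain_last:
  assumes "alternating_chain K L ws" "even (length ws)" "ws \<noteq> []"
  shows "last ws \<in> L"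
proof -
  from assms(2,3) have "length ws - 1 < length ws" "odd (length ws - 1)" by auto
  with assms(1,3) show ?thesis unfolding alternating_chain_def by (simp add: last_conv_nth)
qed

fun tower_seq :: "nat \<Rightarrow> nat list list" where
  "tower_seq 0 = [[], [0]]"
| "tower_seq (Suc m) = tower_seq m @ map (\<lambda>t. last (tower_seq m) @ Suc m # t) (tower_seq m)"

lemma length_tower_seq: "length (tower_seq m) = 2 ^ Suc m"
  by (induction m) auto

lemma tower_seq_nonempty: "tower_seq m \<noteq> []"
  using length_tower_seq[of m] by auto

lemma hd_tower_seq: "hd (tower_seq m) = []"
  by (induction m) (auto simp: tower_seq_nonempty)

lemma alternating_chain_tower_seq:
  "alternating_chain (descent_lang m) (ends_zero_lang m) (tower_seq m)"
proof (induction m)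
  case 0
  have "[] \<in> descent_lang 0" "[0] \<in> ends_zero_lang 0"
    by (auto simp: descent_lang_def ends_zero_lang_def)
  then show ?case by (auto simp: alternating_chain_def less_Suc_eq numeral_2_eq_2)
next
  case (Suc m)
  let ?z = "last (tower_seq m)"
  let ?K = "descent_lang (Suc m)" and ?L = "ends_zero_lang (Suc m)"
  have z: "?z \<in> ends_zero_lang m"
    using alternating_chain_last[OF Suc.IH] length_tower_seq tower_seq_nonempty by simp
  have "alternating_chain ?K ?L (tower_seq m)"
    using Suc.IH by (rule alternating_chain_mono)
      (auto simp: descent_lang_def ends_zero_lang_def le_Suc_eq)
  moreover have "alternating_chain ?K ?L (map (\<lambda>t. ?z @ Suc m # t) (tower_seq m))"
    using Suc.IH
  proof (rule alternating_chain_map)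
    show "(\<lambda>t. ?z @ Suc m # t) ` descent_lang m \<subseteq> ?K"
      using z descent_lang_Suc_extend unfolding ends_zero_lang_def by blast
    show "(\<lambda>t. ?z @ Suc m # t) ` ends_zero_lang m \<subseteq> ?L"
      using z unfolding ends_zero_lang_def by (auto simp: subset_iff) (meson le_SucI)+
  qed (simp add: subseq_append')
  moreover have "subseq ?z (hd (map (\<lambda>t. ?z @ Suc m # t) (tower_seq m)))"
    using tower_seq_nonempty hd_tower_seq by (simp add: hd_map subseq_rev_drop_many)
  ultimately show ?case
    using length_tower_seq tower_seq_nonempty by (auto intro: alternating_chain_append)
qed

theorem theorem9:
  fixes m :: nat
  shows "\<exists>(Al :: nat set) (Q1 :: nat set) I1 F1 d1 (Q2 :: nat set) I2 F2 d2.
     card Al = m + 1 \<and>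
     is_nfa Al Q1 I1 F1 d1 \<and> card Q1 = m + 1 \<and>
     is_dfa Al Q2 I2 F2 d2 \<and> card Q2 = 2 \<and>
     (\<exists>ws. is_tower (lang Al I1 d1 F1) (lang Al I2 d2 F2) ws \<and> length ws = 2 ^ (m + 1)) \<and>
     \<not> (\<exists>w. is_infinite_tower (lang Al I1 d1 F1) (lang Al I2 d2 F2) w)"
proof -
  let ?K = "lang {..m} {..m} descent_delta {0}" and ?L = "lang {..m} {0} last_zero_delta {1}"
  have nfa: "is_nfa {..m} {..m} {..m} {0} descent_delta"
    by (auto simp: is_nfa_def descent_delta_def)
  have dfa: "is_dfa {..m} {0, 1} {0} {1} last_zero_delta"
    by (auto simp: is_dfa_def is_nfa_def last_zero_delta_def)
  have "descent_lang m \<inter> ends_zero_lang m = {}"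
    using descent_lang_ends_nonzero unfolding ends_zero_lang_def by fastforce
  then have tower: "is_tower ?K ?L (tower_seq m)"
    unfolding lang_descent_delta lang_last_zero_delta
    using alternating_chain_is_tower tower_seq_nonempty alternating_chain_tower_seq by blast
  have no_infinite: "\<not> (\<exists>w. is_infinite_tower ?K ?L w)"
    unfolding lang_descent_delta lang_last_zero_delta
    using infinite_tower_zero_chain no_zero_chain_descent by blast
  have "card {..m} = m + 1" "card {0, 1 :: nat} = 2" "length (tower_seq m) = 2 ^ (m + 1)"
    by (simp_all add: length_tower_seq)
  with nfa dfa tower no_infinite show ?thesis by blast
qed

end
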